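(* Let $\alpha\in(1/2,1/\sqrt2)$ and $B\coloneqq\overline{R_\varepsilon\setminus\big(R_0\cap[H_+^\delta\cup H_-^\delta]\big)}$. For any two distinct finite words $w\ne w'$ in $\{1,2\}^*$ and any $t\in\mathbb{R}$, $F_w^t(B)\cap F_{w'}^t(B)=\emptyset$.
   Context: Constants: $\varepsilon=\frac1{4\alpha}-\frac1{2\sqrt2}$, $\delta=\frac14-\frac{\alpha}{2\sqrt2}$. Let $\eta\in C_c^\infty(\mathbb{R})$ be nonnegative with support in $(0,1)$ and $\int_0^1\eta=\delta$. $\mathcal{R}(x_1,x_2)=(-x_2,x_1)$. For $t\in\mathbb{R}$, $F_1^t(x)=\big(1-\int_0^t\eta,0\big)+\alpha\mathcal{R}x$, $F_2^t(x)=\big(-1+\int_0^t\eta,0\big)+\alpha\mathcal{R}x$, and for $w\in\{1,2\}^k$, $F_w^t=F_{w_1}^t\circ\cdots\circ F_{w_k}^t$, $F_\emptyset^t=\mathrm{Id}$; $\{1,2\}^*=\bigcup_{k\ge0}\{1,2\}^k$. $R_\xi=[-2-\xi,2+\xi]\times[-\sqrt2-\xi,\sqrt2+\xi]$; $H_\pm^\xi=\{x:\pm x_1\ge\xi\}$. *)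

theory Defs
  imports "HOL-Analysis.Analysis"
begin

type_synonym pt = "real \<times> real"

definition eps_c :: "real \<Rightarrow> real" where
  "eps_c \<alpha> = 1 / (4 * \<alpha>) - 1 / (2 * sqrt 2)"

definition delta_c :: "real \<Rightarrow> real" where
  "delta_c \<alpha> = 1/4 - \<alpha> / (2 * sqrt 2)"

definition smooth_fun :: "(real \<Rightarrow> real) \<Rightarrow> bool" where
  "smooth_fun f \<longleftrightarrow> (\<exists>D :: nat \<Rightarrow> real \<Rightarrow> real. D 0 = f \<and>
      (\<forall>n x. (D n has_real_derivative D (Suc n) x) (at x)))"

definition fsupport :: "(real \<Rightarrow> real) \<Rightarrow> real set" where
  "fsupport f = closure {x. f x \<noteq> 0}"

definition int0 :: "(real \<Rightarrow> real) \<Rightarrow> real \<Rightarrow> real" where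
  "int0 \<eta> t = (if 0 \<le> t then integral {0..t} \<eta> else - integral {t..0} \<eta>)"

definition rot :: "pt \<Rightarrow> pt" where
  "rot x = (- snd x, fst x)"

definition Fmap :: "real \<Rightarrow> (real \<Rightarrow> real) \<Rightarrow> real \<Rightarrow> nat \<Rightarrow> pt \<Rightarrow> pt" where
  "Fmap \<alpha> \<eta> t i x =
     (if i = 1 then (1 - int0 \<eta> t, 0) else (-1 + int0 \<eta> t, 0)) + \<alpha> *\<^sub>R rot x"

definition Fword :: "real \<Rightarrow> (real \<Rightarrow> real) \<Rightarrow> real \<Rightarrow> nat list \<Rightarrow> pt \<Rightarrow> pt" where
  "Fword \<alpha> \<eta> t w = foldr (\<lambda>i g. Fmap \<alpha> \<eta> t i \<circ> g) w id"

definition Rect :: "real \<Rightarrow> pt set" where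
  "Rect \<xi> = {-2-\<xi>..2+\<xi>} \<times> {-sqrt 2-\<xi>..sqrt 2+\<xi>}"

definition Hplus :: "real \<Rightarrow> pt set" where
  "Hplus \<xi> = {x. fst x \<ge> \<xi>}"

definition Hminus :: "real \<Rightarrow> pt set" where
  "Hminus \<xi> = {x. - fst x \<ge> \<xi>}"

definition Bset :: "real \<Rightarrow> pt set" where
  "Bset \<alpha> = closure (Rect (eps_c \<alpha>) - (Rect 0 \<inter> (Hplus (delta_c \<alpha>) \<union> Hminus (delta_c \<alpha>))))"

end

theory Submission
  imports Defs
begin

text \<open>For \<open>0 \<le> int0 \<eta> t \<le> \<delta>\<close>, each map \<open>F\<^sub>i\<close> sends the rectangle \<open>R\<^sub>\<epsilon>\<close> into an open box,
  \<open>(\<delta>,2) \<times> (-\<surd>2,\<surd>2)\<close> for \<open>i = 1\<close> and \<open>(-2,-\<delta>) \<times> (-\<surd>2,\<surd>2)\<close> for \<open>i = 2\<close>. The two boxes are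
  disjoint, lie in \<open>R\<^sub>\<epsilon>\<close>, and belong to the part \<open>R\<^sub>0 \<inter> (H\<^sub>+\<^sup>\<delta> \<union> H\<^sub>-\<^sup>\<delta>)\<close> removed from
  \<open>R\<^sub>\<epsilon>\<close>; being open, they also miss its closure \<open>B\<close>. So \<open>F\<^sub>w(B)\<close> lies in the box of the first
  letter of \<open>w\<close> whenever \<open>w\<close> is nonempty, and two distinct words are separated at their first
  differing letter, since all maps are injective.\<close>

definition word_map :: "('i \<Rightarrow> 'a \<Rightarrow> 'a) \<Rightarrow> 'i list \<Rightarrow> 'a \<Rightarrow> 'a" where
  "word_map f w = foldr (\<lambda>i g. f i \<circ> g) w id"

lemma word_map_Nil [simp]: "word_map f [] = id"
  by (simp add: word_map_def)

lemma word_map_Cons [simp]: "word_map f (i # w) = f i \<circ> word_map f w"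
  by (simp add: word_map_def)

lemma Fword_eq_word_map: "Fword \<alpha> \<eta> t = word_map (Fmap \<alpha> \<eta> t)"
  by (simp add: fun_eq_iff Fword_def word_map_def)

locale separated_system =
  fixes I :: "'i set" and f :: "'i \<Rightarrow> 'a \<Rightarrow> 'a" and R B :: "'a set" and U :: "'i \<Rightarrow> 'a set"
  assumes inj_on_R: "i \<in> I \<Longrightarrow> inj_on (f i) R"
    and image_R_subset: "i \<in> I \<Longrightarrow> f i ` R \<subseteq> U i"
    and U_subset_R: "i \<in> I \<Longrightarrow> U i \<subseteq> R"
    and U_disjoint: "i \<in> I \<Longrightarrow> j \<in> I \<Longrightarrow> i \<noteq> j \<Longrightarrow> U i \<inter> U j = {}"
    and U_Int_B: "i \<in> I \<Longrightarrow> U i \<inter> B = {}"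
    and B_subset_R: "B \<subseteq> R"
begin

lemma word_map_image_subset_R: "set w \<subseteq> I \<Longrightarrow> word_map f w ` B \<subseteq> R"
proof (induction w)
  case Nil
  show ?case using B_subset_R by simp
next
  case (Cons i w)
  then have "word_map f (i # w) ` B \<subseteq> f i ` R"
    by (auto simp: image_comp[symmetric])
  also have "\<dots> \<subseteq> R"
    using Cons.prems image_R_subset U_subset_R by auto
  finally show ?case .
qed

lemma word_map_Cons_image_subset:
  assumes "set (i # w) \<subseteq> I"
  shows "word_map f (i # w) ` B \<subseteq> U i"
proof -
  have "f i ` word_map f w ` B \<subseteq> f i ` R"
    using assms word_map_image_subset_R by (intro image_mono) auto
  also have "\<dots> \<subseteq> U i"
    using assms image_R_subset by simp
  finally show ?thesis
    by (simp add: image_comp)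
qed

lemma word_map_images_disjoint:
  "set w \<subseteq> I \<Longrightarrow> set w' \<subseteq> I \<Longrightarrow> w \<noteq> w' \<Longrightarrow> word_map f w ` B \<inter> word_map f w' ` B = {}"
proof (induction w arbitrary: w')
  case Nil
  then obtain j v where "w' = j # v"
    by (cases w') auto
  then show ?case
    using Nil.prems word_map_Cons_image_subset[of j v] U_Int_B[of j] by auto
next
  case (Cons i w)
  show ?case
  proof (cases w')
    case Nil
    then show ?thesis
      using Cons.prems word_map_Cons_image_subset[of i w] U_Int_B[of i] by auto
  next
    case w': (Cons j v)
    show ?thesis
    proof (cases "i = j")
      case True
      have "word_map f w ` B \<inter> word_map f v ` B = {}"
        using Cons w' True by auto
      moreover have "inj_on (f i) R" "word_map f w ` B \<subseteq> R" "word_map f v ` B \<subseteq> R"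
        using Cons.prems w' inj_on_R word_map_image_subset_R by auto
      ultimately have "f i ` word_map f w ` B \<inter> f i ` word_map f v ` B = {}"
        by (simp add: True inj_on_image_Int[symmetric])
      then show ?thesis
        using w' True by (simp add: image_comp)
    next
      case False
      then have "U i \<inter> U j = {}"
        using Cons.prems w' U_disjoint by auto
      then show ?thesis
        using word_map_Cons_image_subset[of i w] word_map_Cons_image_subset[of j v] Cons.prems w'
        by blast
    qed
  qed
qed

end

lemma continuous_on_smooth_fun: "smooth_fun f \<Longrightarrow> continuous_on S f"
proof (intro continuous_at_imp_continuous_on ballI)
  fix x
  assume "smooth_fun f"
  then obtain D where "D 0 = f" "\<And>n x. (D n has_real_derivative D (Suc n) x) (at x)"
    unfolding smooth_fun_def by blast
  then show "isCont f x"
    using DERIV_isCont by metis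
qed

lemma fsupport_subset_zero: "fsupport f \<subseteq> S \<Longrightarrow> x \<notin> S \<Longrightarrow> f x = 0"
  unfolding fsupport_def using closure_subset[of "{x. f x \<noteq> 0}"] by blast

lemma int0_bounds:
  fixes \<eta> :: "real \<Rightarrow> real"
  assumes int: "\<And>a b. \<eta> integrable_on {a..b}" and nonneg: "\<And>x. 0 \<le> \<eta> x"
    and zero: "\<And>x. x \<notin> {0<..<1} \<Longrightarrow> \<eta> x = 0"
  shows "0 \<le> int0 \<eta> t" "int0 \<eta> t \<le> integral {0..1} \<eta>"
proof -
  have integral_zero: "integral {a..b} \<eta> = 0" if "b \<le> 0 \<or> 1 \<le> a" for a b
  proof -
    have "\<eta> x = 0" if "x \<in> {a..b}" for x
      using zero \<open>b \<le> 0 \<or> 1 \<le> a\<close> that by fastforce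
    then have "integral {a..b} \<eta> = integral {a..b} (\<lambda>_. 0)"
      by (rule integral_cong)
    then show ?thesis
      by simp
  qed
  have integral_nonneg: "0 \<le> integral {a..b} \<eta>" for a b
    using int nonneg by (rule Henstock_Kurzweil_Integration.integral_nonneg)
  have "0 \<le> int0 \<eta> t \<and> int0 \<eta> t \<le> integral {0..1} \<eta>"
  proof (cases "0 \<le> t")
    case True
    let ?m = "max t 1"
    have "integral {0..t} \<eta> \<le> integral {0..?m} \<eta>"
      using int nonneg by (intro integral_subset_le) auto
    also have "\<dots> = integral {0..1} \<eta> + integral {1..?m} \<eta>"
      using int by (intro Henstock_Kurzweil_Integration.integral_combine[symmetric]) auto
    also have "\<dots> = integral {0..1} \<eta>"
      using integral_zero[where a = 1 and b = ?m] by simp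
    finally show ?thesis
      using True integral_nonneg by (simp add: int0_def)
  next
    case False
    then show ?thesis
      using integral_nonneg integral_zero[where a = t and b = 0] by (simp add: int0_def)
  qed
  then show "0 \<le> int0 \<eta> t" "int0 \<eta> t \<le> integral {0..1} \<eta>"
    by auto
qed

lemma alpha_mult_eps_c: "\<alpha> \<noteq> 0 \<Longrightarrow> \<alpha> * eps_c \<alpha> = delta_c \<alpha>"
  by (simp add: eps_c_def delta_c_def field_simps)

lemma delta_c_eq: "delta_c \<alpha> = (1 - \<alpha> * sqrt 2) / 4"
proof -
  have "\<alpha> / (2 * sqrt 2) = \<alpha> * sqrt 2 / 4"
    by (simp add: field_simps)
  then show ?thesis
    by (simp add: delta_c_def)
qed

lemma delta_c_pos: "\<alpha> < 1 / sqrt 2 \<Longrightarrow> 0 < delta_c \<alpha>"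
  by (simp add: delta_c_eq field_simps)

lemma eps_c_pos: "0 < \<alpha> \<Longrightarrow> \<alpha> < 1 / sqrt 2 \<Longrightarrow> 0 < eps_c \<alpha>"
  using alpha_mult_eps_c[of \<alpha>] delta_c_pos[of \<alpha>] zero_less_mult_pos[of \<alpha> "eps_c \<alpha>"] by simp

definition image_box :: "real \<Rightarrow> nat \<Rightarrow> pt set" where
  "image_box \<delta> i = (if i = 1 then {\<delta><..<2} else {-2<..< -\<delta>}) \<times> {- sqrt 2<..<sqrt 2}"

lemma open_image_box: "open (image_box \<delta> i)"
  by (simp add: image_box_def open_Times)

lemma image_box_disjoint:
  "0 \<le> \<delta> \<Longrightarrow> (i = 1) \<noteq> (j = 1) \<Longrightarrow> image_box \<delta> i \<inter> image_box \<delta> j = {}"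
  by (auto simp: image_box_def)

lemma image_box_subset_Rect: "0 \<le> \<delta> \<Longrightarrow> 0 \<le> \<epsilon> \<Longrightarrow> image_box \<delta> i \<subseteq> Rect \<epsilon>"
  by (auto simp: image_box_def Rect_def)

lemma image_box_subset_removed: "0 \<le> \<delta> \<Longrightarrow> image_box \<delta> i \<subseteq> Rect 0 \<inter> (Hplus \<delta> \<union> Hminus \<delta>)"
  by (auto simp: image_box_def Rect_def Hplus_def Hminus_def)

lemma image_box_Int_Bset: "0 \<le> delta_c \<alpha> \<Longrightarrow> image_box (delta_c \<alpha>) i \<inter> Bset \<alpha> = {}"
  unfolding Bset_def
  using image_box_subset_removed open_Int_closure_eq_empty[OF open_image_box] by blast

lemma Bset_subset_Rect: "Bset \<alpha> \<subseteq> Rect (eps_c \<alpha>)"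
  unfolding Bset_def by (rule closure_minimal) (auto simp: Rect_def intro!: closed_Times)

lemma inj_Fmap: "\<alpha> \<noteq> 0 \<Longrightarrow> inj (Fmap \<alpha> \<eta> t i)"
  by (rule injI) (auto simp: Fmap_def rot_def prod_eq_iff)

lemma Fmap_Rect_subset_image_box:
  assumes \<alpha>: "0 < \<alpha>" "\<alpha> < 1 / sqrt 2"
    and s: "0 \<le> int0 \<eta> t" "int0 \<eta> t \<le> delta_c \<alpha>"
  shows "Fmap \<alpha> \<eta> t i ` Rect (eps_c \<alpha>) \<subseteq> image_box (delta_c \<alpha>) i"
proof (rule image_subsetI)
  fix x
  assume "x \<in> Rect (eps_c \<alpha>)"
  then obtain x1 x2 where x: "x = (x1, x2)" "\<bar>x1\<bar> \<le> 2 + eps_c \<alpha>" "\<bar>x2\<bar> \<le> sqrt 2 + eps_c \<alpha>"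
    by (cases x) (auto simp: Rect_def)
  define \<delta> where "\<delta> = delta_c \<alpha>"
  have \<delta>_pos: "0 < \<delta>"
    using delta_c_pos \<alpha>(2) by (simp add: \<delta>_def)
  have \<alpha>_sqrt2: "\<alpha> * sqrt 2 = 1 - 4 * \<delta>"
    by (simp add: \<delta>_def delta_c_eq field_simps)
  have \<alpha>x2: "\<bar>\<alpha> * x2\<bar> \<le> \<alpha> * sqrt 2 + \<delta>"
    using mult_left_mono[OF x(3), of \<alpha>] \<alpha> alpha_mult_eps_c[of \<alpha>]
    by (simp add: \<delta>_def abs_mult algebra_simps)
  have \<alpha>x1: "\<bar>\<alpha> * x1\<bar> \<le> 2 * \<alpha> + \<delta>"
    using mult_left_mono[OF x(2), of \<alpha>] \<alpha> alpha_mult_eps_c[of \<alpha>]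
    by (simp add: \<delta>_def abs_mult algebra_simps)
  have "2 * \<alpha> = \<alpha> * sqrt 2 * sqrt 2"
    by (simp add: mult.assoc)
  also have "\<dots> = (1 - 4 * \<delta>) * sqrt 2"
    by (simp add: \<alpha>_sqrt2)
  moreover have "\<delta> * 1 < \<delta> * (4 * sqrt 2)"
  proof (rule mult_strict_left_mono[OF _ \<delta>_pos])
    have "1 < sqrt (2::real)"
      by simp
    then show "1 < 4 * sqrt (2::real)"
      by linarith
  qed
  ultimately have "2 * \<alpha> + \<delta> < sqrt 2"
    by (simp add: algebra_simps)
  then show "Fmap \<alpha> \<eta> t i x \<in> image_box (delta_c \<alpha>) i"
    using \<alpha>x1 \<alpha>x2 \<alpha>_sqrt2 \<delta>_pos s
    by (auto simp: x Fmap_def rot_def image_box_def \<delta>_def[symmetric] abs_le_iff abs_less_iff)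
qed

theorem lemma2p8:
  fixes \<alpha> t :: real and \<eta> :: "real \<Rightarrow> real" and w w' :: "nat list"
  assumes "1/2 < \<alpha>" "\<alpha> < 1 / sqrt 2"
    and "smooth_fun \<eta>" "\<forall>x. 0 \<le> \<eta> x" "fsupport \<eta> \<subseteq> {0<..<1}"
    and "integral {0..1} \<eta> = delta_c \<alpha>"
    and "set w \<subseteq> {1, 2}" "set w' \<subseteq> {1, 2}" "w \<noteq> w'"
  shows "Fword \<alpha> \<eta> t w ` Bset \<alpha> \<inter> Fword \<alpha> \<eta> t w' ` Bset \<alpha> = {}"
proof -
  have \<alpha>: "0 < \<alpha>"
    using assms(1) by simp
  have \<delta>: "0 < delta_c \<alpha>" and \<epsilon>: "0 < eps_c \<alpha>"
    using \<alpha> assms(2) delta_c_pos eps_c_pos by auto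
  have s: "0 \<le> int0 \<eta> t" "int0 \<eta> t \<le> delta_c \<alpha>"
    using int0_bounds[OF integrable_continuous_real[OF continuous_on_smooth_fun[OF assms(3)]]
        assms(4)[rule_format] fsupport_subset_zero[OF assms(5)]] assms(6)
    by auto
  interpret separated_system "{1, 2}" "Fmap \<alpha> \<eta> t" "Rect (eps_c \<alpha>)" "Bset \<alpha>"
    "image_box (delta_c \<alpha>)"
  proof unfold_locales
    show "inj_on (Fmap \<alpha> \<eta> t i) (Rect (eps_c \<alpha>))" for i
      using inj_on_subset[OF inj_Fmap subset_UNIV] \<alpha> by simp
    show "Fmap \<alpha> \<eta> t i ` Rect (eps_c \<alpha>) \<subseteq> image_box (delta_c \<alpha>) i" for i
      using \<alpha> assms(2) s by (rule Fmap_Rect_subset_image_box)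
    show "image_box (delta_c \<alpha>) i \<subseteq> Rect (eps_c \<alpha>)" for i
      using \<delta> \<epsilon> by (simp add: image_box_subset_Rect)
    show "image_box (delta_c \<alpha>) i \<inter> image_box (delta_c \<alpha>) j = {}"
      if "i \<in> {1, 2}" "j \<in> {1, 2}" "i \<noteq> j" for i j
      using \<delta> that by (intro image_box_disjoint) auto
    show "image_box (delta_c \<alpha>) i \<inter> Bset \<alpha> = {}" for i
      using \<delta> by (simp add: image_box_Int_Bset)
  qed (rule Bset_subset_Rect)
  show ?thesis
    using word_map_images_disjoint assms(7-9) by (simp add: Fword_eq_word_map)
qed

end
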